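(* Let $K\in\mathbb N$, $p_1,\dots,p_K>0$ with $\sum_k p_k=1$, $\sigma_1^2,\dots,\sigma_K^2>0$, and $\sigma_{\mathrm{glob}}^2=\sum_{k=1}^K p_k\sigma_k^2$. Let $Q(x)=\frac1{\sqrt2}(\operatorname{sign}(\operatorname{Re}x)+\mathrm j\operatorname{sign}(\operatorname{Im}x))$ and let $n\sim\mathcal N_{\mathbb C}(0,\eta^2)$, $\eta^2>0$. Let $\mathrm{MSE}_{\mathrm{GMM}}=\mathbb E[|h-\mathbb E[h\mid r]|^2]$ for $r=Q(h+n)$ with $h\sim\sum_k p_k\mathcal N_{\mathbb C}(0,\sigma_k^2)$ independent of $n$, and let $\mathrm{MSE}_{\mathrm{Gauss}}=\mathbb E[|g-\mathbb E[g\mid r']|^2]$ for $r'=Q(g+n)$ with $g\sim\mathcal N_{\mathbb C}(0,\sigma_{\mathrm{glob}}^2)$ independent of $n$. Then for every $\eta^2>0$, $$\mathrm{MSE}_{\mathrm{Gauss}}\le\mathrm{MSE}_{\mathrm{GMM}}.$$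
   Context: $\mathcal N_{\mathbb C}(0,\sigma^2)$ denotes the circularly symmetric complex Gaussian distribution with variance $\sigma^2$. The two MSEs are those of the respective conditional mean (MMSE) estimators, for signals with the same global variance. *)

theory Defs
  imports "HOL-Probability.Probability"
begin

definition cgauss_density :: "real \<Rightarrow> complex \<Rightarrow> real" where
  "cgauss_density v z = exp (- ((cmod z)^2 / v)) / (pi * v)"

definition gmm_density :: "nat \<Rightarrow> (nat \<Rightarrow> real) \<Rightarrow> (nat \<Rightarrow> real) \<Rightarrow> complex \<Rightarrow> real" where
  "gmm_density K p s z = (\<Sum>k<K. p k * cgauss_density (s k) z)"

definition Qb :: "complex \<Rightarrow> complex" where
  "Qb x = Complex (sgn (Re x)) (sgn (Im x)) / complex_of_real (sqrt 2)"

text \<open>Conditional mean E[X | R] for a discrete (finitely-valued) observation R,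
  evaluated at outcome w:  E[X 1{R = R w}] / P(R = R w).\<close>
definition cond_mean_disc :: "'a measure \<Rightarrow> ('a \<Rightarrow> complex) \<Rightarrow> ('a \<Rightarrow> 'b) \<Rightarrow> 'a \<Rightarrow> complex" where
  "cond_mean_disc M X R w =
     (let A = {x \<in> space M. R x = R w}
      in (\<integral>x. indicator A x *\<^sub>R X x \<partial>M) / complex_of_real (measure M A))"

definition mse_quant :: "'a measure \<Rightarrow> ('a \<Rightarrow> complex) \<Rightarrow> ('a \<Rightarrow> complex) \<Rightarrow> real" where
  "mse_quant M h n =
     (\<integral>w. (cmod (h w - cond_mean_disc M h (\<lambda>x. Qb (h x + n x)) w))^2 \<partial>M)"

end

theory Submission
  imports Defs "HOL-Real_Asymp.Real_Asymp"
begin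

text \<open>
  The quantizer \<open>Qb\<close> only records the signs of \<open>Re (h + n)\<close> and \<open>Im (h + n)\<close>, so the
  conditional-mean MSE is \<open>E |h|\<^sup>2 - \<Sum>\<^sub>q |E [h; Q = q]|\<^sup>2 / P (Q = q)\<close>, summed over the sign
  cells. Given the mixture component \<open>k\<close>, the pairs \<open>(Re h, Re n)\<close> and \<open>(Im h, Im n)\<close> are
  independent pairs of independent real Gaussians; hence each open quadrant has probability
  \<open>1/4\<close> and \<open>E [Re h; Re (h + n) > 0] = \<sigma>\<^sub>k\<^sup>2 / (2 sqrt (\<pi> (\<sigma>\<^sub>k\<^sup>2 + \<eta>\<^sup>2)))\<close>. This gives
  \<open>MSE = \<Sum>\<^sub>k p\<^sub>k \<sigma>\<^sub>k\<^sup>2 - 8 m\<^sup>2\<close> with \<open>m = \<Sum>\<^sub>k p\<^sub>k \<sigma>\<^sub>k\<^sup>2 / (2 sqrt (\<pi> (\<sigma>\<^sub>k\<^sup>2 + \<eta>\<^sup>2)))\<close>.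
  The Gaussian of the same global variance has the same first term, and as
  \<open>v \<mapsto> v / sqrt (v + \<eta>\<^sup>2)\<close> is concave, Jensen's inequality makes its \<open>m\<close> the largest.
\<close>

lemma (in pair_sigma_finite) integrable_mult_fst_snd:
  fixes f :: "'a \<Rightarrow> real" and g :: "'b \<Rightarrow> real"
  assumes f: "integrable M1 f" and g: "integrable M2 g"
  shows "integrable (M1 \<Otimes>\<^sub>M M2) (\<lambda>x. f (fst x) * g (snd x))"
proof (rule Fubini_integrable)
  show "integrable M1 (\<lambda>x. \<integral>y. norm (f (fst (x, y)) * g (snd (x, y))) \<partial>M2)"
    using f by (simp add: abs_mult integrable_abs)
  show "AE x in M1. integrable M2 (\<lambda>y. f (fst (x, y)) * g (snd (x, y)))"
    using g by simp
qed (use f g in simp)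

lemma (in pair_sigma_finite) integral_mult_fst_snd:
  fixes f :: "'a \<Rightarrow> real" and g :: "'b \<Rightarrow> real"
  assumes f: "integrable M1 f" and g: "integrable M2 g"
  shows "(\<integral>x. f (fst x) * g (snd x) \<partial>(M1 \<Otimes>\<^sub>M M2)) = (\<integral>x. f x \<partial>M1) * (\<integral>y. g y \<partial>M2)"
  by (subst integral_fst'[symmetric, OF integrable_mult_fst_snd[OF f g]]) simp

lemma AE_lborel_pair_sum_neq: "AE a in lborel \<Otimes>\<^sub>M lborel. fst a + snd a \<noteq> (c :: real)"
proof (rule lborel_pair.AE_pair_measure)
  show "AE x in lborel. AE y in lborel. fst (x, y) + snd (x, y) \<noteq> c"
  proof (rule AE_I2)
    fix x :: real
    show "AE y in lborel. fst (x, y) + snd (x, y) \<noteq> c"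
      by (rule AE_mp[OF AE_lborel_singleton[of "c - x"]]) auto
  qed
qed measurable

section \<open>Conditional means given a finitely-valued observation\<close>

lemma (in finite_measure) square_norm_integrable_imp_integrable:
  fixes X :: "'a \<Rightarrow> 'b :: {second_countable_topology, banach, real_normed_div_algebra}"
  assumes [measurable]: "X \<in> borel_measurable M" and "integrable M (\<lambda>x. (norm (X x))\<^sup>2)"
  shows "integrable M X"
proof (rule square_integrable_imp_integrable)
  show "integrable M (\<lambda>x. X x ^ 2)"
    using assms by (subst integrable_norm_iff[symmetric]) (auto simp: norm_power)
qed simp

lemma cmod_diff_square: "(cmod (a - c))\<^sup>2 = (cmod a)\<^sup>2 + (cmod c)\<^sup>2 - 2 * Re (cnj c * a)"
  unfolding cmod_power2 by (simp add: power2_eq_square algebra_simps)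

lemma cmod_divide_square_cross_term:
  fixes E :: complex and P :: real
  shows "(cmod (E / of_real P))\<^sup>2 * P - 2 * Re (cnj (E / of_real P) * E) = - ((cmod E)\<^sup>2 / P)"
proof (cases "P = 0")
  case False
  have "cnj E * E = of_real ((cmod E)\<^sup>2)"
    unfolding cmod_power2 by (simp add: complex_eq_iff power2_eq_square)
  then have "cnj (E / of_real P) * E = of_real ((cmod E)\<^sup>2 / P)"
    by simp
  then have "Re (cnj (E / of_real P) * E) = (cmod E)\<^sup>2 / P"
    by (simp only: Re_complex_of_real)
  moreover have "(cmod (E / of_real P))\<^sup>2 * P = (cmod E)\<^sup>2 / P"
    using False by (simp add: norm_divide power2_eq_square field_simps)
  ultimately show ?thesis by linarith
qed simp

lemma (in finite_measure) integral_indicator_cross_term: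
  assumes A: "A \<in> sets M" and X: "integrable M X"
  shows "(\<integral>w. indicator A w * ((cmod v)\<^sup>2 - 2 * Re (cnj v * X w)) \<partial>M)
       = (cmod v)\<^sup>2 * measure M A - 2 * Re (cnj v * (\<integral>w. indicator A w *\<^sub>R X w \<partial>M))"
proof -
  have XA: "integrable M (\<lambda>w. cnj v * (indicator A w *\<^sub>R X w))"
    by (rule integrable_mult_right) (rule integrable_mult_indicator[OF A X])
  have "(\<integral>w. indicator A w * ((cmod v)\<^sup>2 - 2 * Re (cnj v * X w)) \<partial>M)
      = (\<integral>w. (cmod v)\<^sup>2 * indicator A w - 2 * Re (cnj v * (indicator A w *\<^sub>R X w)) \<partial>M)"
    by (intro Bochner_Integration.integral_cong) (auto simp: indicator_def)
  also have "\<dots> = (\<integral>w. (cmod v)\<^sup>2 * indicator A w \<partial>M) - (\<integral>w. 2 * Re (cnj v * (indicator A w *\<^sub>R X w)) \<partial>M)"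
    using A XA integrable_mult_indicator[OF A X]
    by (intro Bochner_Integration.integral_diff integrable_mult_right integrable_Re)
      (auto simp: emeasure_eq_measure)
  also have "\<dots> = (cmod v)\<^sup>2 * measure M A - 2 * Re (\<integral>w. cnj v * (indicator A w *\<^sub>R X w) \<partial>M)"
    using A by (simp only: integral_mult_right_zero integral_Re[OF XA]) simp
  finally show ?thesis by (simp only: integral_mult_right_zero)
qed

lemma (in prob_space) mse_cond_mean_disc:
  fixes X :: "'a \<Rightarrow> complex" and T :: "'a \<Rightarrow> 'i"
  assumes [measurable]: "X \<in> borel_measurable M" and X2: "integrable M (\<lambda>x. (cmod (X x))\<^sup>2)"
    and F: "finite F" and TF: "\<And>x. x \<in> space M \<Longrightarrow> T x \<in> F"
    and cells: "\<And>q. q \<in> F \<Longrightarrow> {x \<in> space M. T x = q} \<in> events"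
  shows "(\<integral>w. (cmod (X w - cond_mean_disc M X T w))\<^sup>2 \<partial>M)
       = (\<integral>w. (cmod (X w))\<^sup>2 \<partial>M)
         - (\<Sum>q\<in>F. (cmod (\<integral>x. indicator {x \<in> space M. T x = q} x *\<^sub>R X x \<partial>M))\<^sup>2
                    / measure M {x \<in> space M. T x = q})"
proof -
  define A where "A q = {x \<in> space M. T x = q}" for q
  define v where "v q = (\<integral>x. indicator (A q) x *\<^sub>R X x \<partial>M) / of_real (measure M (A q))" for q
  let ?term = "\<lambda>q w. indicator (A q) w * ((cmod (v q))\<^sup>2 - 2 * Re (cnj (v q) * X w))"
  have X: "integrable M X"
    using X2 by (rule square_norm_integrable_imp_integrable[rotated]) simp
  have pointwise: "(cmod (X w - cond_mean_disc M X T w))\<^sup>2 = (cmod (X w))\<^sup>2 + (\<Sum>q\<in>F. ?term q w)"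
    if w: "w \<in> space M" for w
  proof -
    have cond_mean: "cond_mean_disc M X T w = v (T w)"
      by (simp add: cond_mean_disc_def Let_def v_def A_def)
    have "(\<Sum>q\<in>F. ?term q w) = (\<Sum>q\<in>F. if q = T w then (cmod (v q))\<^sup>2 - 2 * Re (cnj (v q) * X w) else 0)"
      using w by (intro sum.cong) (auto simp: A_def)
    also have "\<dots> = (cmod (v (T w)))\<^sup>2 - 2 * Re (cnj (v (T w)) * X w)"
      using F TF[OF w] by (simp add: sum.delta)
    finally show ?thesis
      by (simp add: cond_mean cmod_diff_square)
  qed
  have term_integrable: "integrable M (?term q)" if "q \<in> F" for q
    using integrable_mult_indicator[OF cells[OF that], of "\<lambda>w. (cmod (v q))\<^sup>2 - 2 * Re (cnj (v q) * X w)"] X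
    by (simp add: A_def)
  have "(\<integral>w. (cmod (X w - cond_mean_disc M X T w))\<^sup>2 \<partial>M) = (\<integral>w. (cmod (X w))\<^sup>2 + (\<Sum>q\<in>F. ?term q w) \<partial>M)"
    by (intro Bochner_Integration.integral_cong) (auto simp: pointwise)
  also have "\<dots> = (\<integral>w. (cmod (X w))\<^sup>2 \<partial>M) + (\<Sum>q\<in>F. \<integral>w. ?term q w \<partial>M)"
    using X2 term_integrable by (simp add: Bochner_Integration.integral_sum)
  also have "(\<Sum>q\<in>F. \<integral>w. ?term q w \<partial>M)
      = (\<Sum>q\<in>F. - ((cmod (\<integral>x. indicator (A q) x *\<^sub>R X x \<partial>M))\<^sup>2 / measure M (A q)))"
  proof (rule sum.cong[OF refl])
    fix q assume "q \<in> F"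
    show "(\<integral>w. ?term q w \<partial>M) = - ((cmod (\<integral>x. indicator (A q) x *\<^sub>R X x \<partial>M))\<^sup>2 / measure M (A q))"
      unfolding integral_indicator_cross_term[OF cells[OF \<open>q \<in> F\<close>, folded A_def] X] v_def
      by (rule cmod_divide_square_cross_term)
  qed
  finally show ?thesis by (simp add: A_def sum_negf)
qed

section \<open>Lebesgue measure on the complex plane\<close>

lemma measurable_Complex[measurable]:
  assumes [measurable]: "f \<in> borel_measurable M" "g \<in> borel_measurable M"
  shows "(\<lambda>x. Complex (f x) (g x)) \<in> borel_measurable M"
  unfolding Complex_eq by measurable

lemma distr_Complex_lborel:
  "distr (lborel \<Otimes>\<^sub>M lborel) borel (\<lambda>(x, y). Complex x y) = (lborel :: complex measure)"
proof (rule lborel_eqI[symmetric])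
  fix l u :: complex
  assume lu: "\<And>b. b \<in> Basis \<Longrightarrow> l \<bullet> b \<le> u \<bullet> b"
  then have "Re l \<le> Re u" "Im l \<le> Im u"
    using lu[of 1] lu[of \<i>] by (auto simp: inner_complex_def)
  moreover have "(\<lambda>(x, y). Complex x y) -` box l u \<inter> space (lborel \<Otimes>\<^sub>M lborel)
      = {Re l<..<Re u} \<times> {Im l<..<Im u}"
    by (auto simp: in_box_complex_iff space_pair_measure)
  ultimately show "emeasure (distr (lborel \<Otimes>\<^sub>M lborel) borel (\<lambda>(x, y). Complex x y)) (box l u)
      = (\<Prod>b\<in>Basis. (u - l) \<bullet> b)"
    by (simp add: emeasure_distr lborel.emeasure_pair_measure_Times Basis_complex_def
        inner_complex_def ennreal_mult)
qed simp

lemma nn_integral_lborel_complex: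
  fixes f :: "complex \<Rightarrow> ennreal"
  assumes [measurable]: "f \<in> borel_measurable borel"
  shows "(\<integral>\<^sup>+z. f z \<partial>lborel) = (\<integral>\<^sup>+x. \<integral>\<^sup>+y. f (Complex x y) \<partial>lborel \<partial>lborel)"
proof -
  have "(\<integral>\<^sup>+z. f z \<partial>lborel) = (\<integral>\<^sup>+p. f (Complex (fst p) (snd p)) \<partial>(lborel \<Otimes>\<^sub>M lborel))"
    by (subst distr_Complex_lborel[symmetric], subst nn_integral_distr) (auto simp: case_prod_beta')
  also have "\<dots> = (\<integral>\<^sup>+x. \<integral>\<^sup>+y. f (Complex x y) \<partial>lborel \<partial>lborel)"
    by (subst lborel.nn_integral_fst[symmetric]) auto
  finally show ?thesis .
qed

definition join_re_im :: "(real \<times> real) \<times> (real \<times> real) \<Rightarrow> complex \<times> complex" where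
  "join_re_im v = (Complex (fst (fst v)) (fst (snd v)), Complex (snd (fst v)) (snd (snd v)))"

lemma join_re_im_simps[simp]:
  "join_re_im ((x, x'), (y, y')) = (Complex x y, Complex x' y')"
  by (simp add: join_re_im_def)

lemma measurable_join_re_im[measurable]:
  "join_re_im \<in> measurable ((lborel \<Otimes>\<^sub>M lborel) \<Otimes>\<^sub>M (lborel \<Otimes>\<^sub>M lborel)) (lborel \<Otimes>\<^sub>M lborel)"
  unfolding join_re_im_def by measurable

lemma nn_integral_join_re_im:
  fixes f :: "complex \<times> complex \<Rightarrow> ennreal"
  assumes [measurable]: "f \<in> borel_measurable (lborel \<Otimes>\<^sub>M lborel)"
  shows "(\<integral>\<^sup>+w. f w \<partial>(lborel \<Otimes>\<^sub>M lborel))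
       = (\<integral>\<^sup>+v. f (join_re_im v) \<partial>((lborel \<Otimes>\<^sub>M lborel) \<Otimes>\<^sub>M (lborel \<Otimes>\<^sub>M lborel)))"
proof -
  let ?I = "\<lambda>x y x' y'. f (Complex x y, Complex x' y')"
  have "(\<integral>\<^sup>+w. f w \<partial>(lborel \<Otimes>\<^sub>M lborel)) = (\<integral>\<^sup>+z. \<integral>\<^sup>+u. f (z, u) \<partial>lborel \<partial>lborel)"
    by (subst lborel.nn_integral_fst[symmetric]) auto
  also have "\<dots> = (\<integral>\<^sup>+z. \<integral>\<^sup>+x'. \<integral>\<^sup>+y'. f (z, Complex x' y') \<partial>lborel \<partial>lborel \<partial>lborel)"
    by (intro nn_integral_cong nn_integral_lborel_complex) auto
  also have "\<dots> = (\<integral>\<^sup>+x. \<integral>\<^sup>+y. \<integral>\<^sup>+x'. \<integral>\<^sup>+y'. ?I x y x' y' \<partial>lborel \<partial>lborel \<partial>lborel \<partial>lborel)"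
    by (subst nn_integral_lborel_complex) auto
  also have "\<dots> = (\<integral>\<^sup>+x. \<integral>\<^sup>+x'. \<integral>\<^sup>+y. \<integral>\<^sup>+y'. ?I x y x' y' \<partial>lborel \<partial>lborel \<partial>lborel \<partial>lborel)"
    by (intro nn_integral_cong lborel_pair.Fubini') auto
  also have "\<dots> = (\<integral>\<^sup>+a. \<integral>\<^sup>+y. \<integral>\<^sup>+y'. f (join_re_im (a, (y, y'))) \<partial>lborel \<partial>lborel \<partial>(lborel \<Otimes>\<^sub>M lborel))"
    by (subst lborel.nn_integral_fst[symmetric]) (auto simp: case_prod_beta')
  also have "\<dots> = (\<integral>\<^sup>+a. \<integral>\<^sup>+b. f (join_re_im (a, b)) \<partial>(lborel \<Otimes>\<^sub>M lborel) \<partial>(lborel \<Otimes>\<^sub>M lborel))"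
    by (intro nn_integral_cong, subst lborel.nn_integral_fst[symmetric]) (auto simp: case_prod_beta')
  also have "\<dots> = (\<integral>\<^sup>+v. f (join_re_im v) \<partial>((lborel \<Otimes>\<^sub>M lborel) \<Otimes>\<^sub>M (lborel \<Otimes>\<^sub>M lborel)))"
    by (subst lborel_pair.nn_integral_fst[symmetric]) auto
  finally show ?thesis .
qed

lemma distr_join_re_im_lborel:
  "distr ((lborel \<Otimes>\<^sub>M lborel) \<Otimes>\<^sub>M (lborel \<Otimes>\<^sub>M lborel)) (lborel \<Otimes>\<^sub>M lborel) join_re_im
     = (lborel \<Otimes>\<^sub>M lborel :: (complex \<times> complex) measure)"
proof (rule measure_eqI)
  fix A assume "A \<in> sets (distr ((lborel \<Otimes>\<^sub>M lborel) \<Otimes>\<^sub>M (lborel \<Otimes>\<^sub>M lborel)) (lborel \<Otimes>\<^sub>M lborel) join_re_im)"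
  then have A[measurable]: "A \<in> sets (lborel \<Otimes>\<^sub>M lborel)" by simp
  have "emeasure (distr ((lborel \<Otimes>\<^sub>M lborel) \<Otimes>\<^sub>M (lborel \<Otimes>\<^sub>M lborel)) (lborel \<Otimes>\<^sub>M lborel) join_re_im) A
      = (\<integral>\<^sup>+v. indicator A (join_re_im v) \<partial>((lborel \<Otimes>\<^sub>M lborel) \<Otimes>\<^sub>M (lborel \<Otimes>\<^sub>M lborel)))"
  proof (subst emeasure_distr)
    have "join_re_im -` A \<in> sets ((lborel \<Otimes>\<^sub>M lborel) \<Otimes>\<^sub>M (lborel \<Otimes>\<^sub>M lborel))"
      using measurable_sets[OF measurable_join_re_im A] by (simp add: space_pair_measure)
    then show "emeasure ((lborel \<Otimes>\<^sub>M lborel) \<Otimes>\<^sub>M (lborel \<Otimes>\<^sub>M lborel))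
        (join_re_im -` A \<inter> space ((lborel \<Otimes>\<^sub>M lborel) \<Otimes>\<^sub>M (lborel \<Otimes>\<^sub>M lborel)))
      = (\<integral>\<^sup>+v. indicator A (join_re_im v) \<partial>((lborel \<Otimes>\<^sub>M lborel) \<Otimes>\<^sub>M (lborel \<Otimes>\<^sub>M lborel)))"
      by (simp add: space_pair_measure nn_integral_indicator[symmetric] indicator_vimage[symmetric]
          del: nn_integral_indicator)
  qed (use A in simp_all)
  also have "\<dots> = emeasure (lborel \<Otimes>\<^sub>M lborel) A"
    using A by (simp add: nn_integral_join_re_im[symmetric])
  finally show "emeasure (distr ((lborel \<Otimes>\<^sub>M lborel) \<Otimes>\<^sub>M (lborel \<Otimes>\<^sub>M lborel)) (lborel \<Otimes>\<^sub>M lborel) join_re_im) A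
      = emeasure (lborel \<Otimes>\<^sub>M lborel) A" .
qed simp

section \<open>Gaussian densities\<close>

definition rgauss_density :: "real \<Rightarrow> real \<Rightarrow> real" where
  "rgauss_density v x = exp (- (x\<^sup>2) / v) / sqrt (pi * v)"

lemma rgauss_density_minus[simp]: "rgauss_density v (- x) = rgauss_density v x"
  by (simp add: rgauss_density_def)

lemma borel_measurable_rgauss_density[measurable]: "rgauss_density v \<in> borel_measurable borel"
  unfolding rgauss_density_def[abs_def] by measurable

lemma rgauss_density_eq_normal_density:
  "0 < v \<Longrightarrow> rgauss_density v = normal_density 0 (sqrt (v / 2))"
  by (simp add: fun_eq_iff rgauss_density_def normal_density_def real_sqrt_mult[symmetric])

lemma cgauss_density_nonneg: "0 \<le> v \<Longrightarrow> 0 \<le> cgauss_density v z"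
  by (simp add: cgauss_density_def)

lemma borel_measurable_cgauss_density[measurable]: "cgauss_density v \<in> borel_measurable borel"
  unfolding cgauss_density_def[abs_def] by measurable

lemma cgauss_density_Complex:
  "0 < v \<Longrightarrow> cgauss_density v (Complex x y) = rgauss_density v x * rgauss_density v y"
  by (simp add: cgauss_density_def rgauss_density_def cmod_def add_divide_distrib
      mult_exp_exp[symmetric] real_sqrt_mult[symmetric] diff_divide_distrib)
     (metis diff_conv_add_uminus exp_add)

lemma integrable_rgauss_density_moment:
  "0 < v \<Longrightarrow> integrable lborel (\<lambda>x. rgauss_density v x * x ^ k)"
  using integrable_normal_moment[of "sqrt (v / 2)" 0 k] by (simp add: rgauss_density_eq_normal_density)

lemma integrable_rgauss_density: "0 < v \<Longrightarrow> integrable lborel (rgauss_density v)"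
  using integrable_rgauss_density_moment[of v 0] by simp

lemma integral_rgauss_density: "0 < v \<Longrightarrow> (\<integral>x. rgauss_density v x \<partial>lborel) = 1"
  by (simp add: rgauss_density_eq_normal_density)

lemma integral_rgauss_density_first_moment:
  "0 < v \<Longrightarrow> (\<integral>x. rgauss_density v x * x \<partial>lborel) = 0"
  using integral_normal_moment_nz_1[of "sqrt (v / 2)" 0] by (simp add: rgauss_density_eq_normal_density)

lemma integral_rgauss_density_second_moment:
  "0 < v \<Longrightarrow> (\<integral>x. rgauss_density v x * x\<^sup>2 \<partial>lborel) = v / 2"
  using integral_normal_moment_even[of "sqrt (v / 2)" 0 1] by (simp add: rgauss_density_eq_normal_density)

text \<open>The antiderivative of \<open>x \<cdot> rgauss_density v x\<close> is \<open>- v / 2 \<cdot> rgauss_density v x\<close>.\<close>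
lemma integral_rgauss_density_first_moment_tail:
  assumes v: "0 < v"
  shows "(\<integral>x. rgauss_density v x * x * of_bool (c < x) \<partial>lborel) = v / 2 * rgauss_density v c"
proof -
  let ?F = "\<lambda>x. - (v / 2) * rgauss_density v x"
  have "(\<integral>x. rgauss_density v x * x * of_bool (c < x) \<partial>lborel)
      = (LBINT x=ereal c..\<infinity>. rgauss_density v x * x)"
    by (auto simp: interval_lebesgue_integral_def set_lebesgue_integral_def indicator_def
        intro!: Bochner_Integration.integral_cong)
  also have "\<dots> = 0 - ?F c"
  proof (rule interval_integral_FTC_integrable)
    fix x :: real
    show "(?F has_vector_derivative rgauss_density v x * x) (at x)"
      unfolding rgauss_density_def has_real_derivative_iff_has_vector_derivative[symmetric]
      using v by (auto intro!: derivative_eq_intros simp: field_simps power2_eq_square)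
    show "isCont (\<lambda>x. rgauss_density v x * x) x"
      unfolding rgauss_density_def using v by (intro continuous_intros) auto
  next
    show "set_integrable lborel (einterval (ereal c) \<infinity>) (\<lambda>x. rgauss_density v x * x)"
      unfolding set_integrable_def
      using integrable_rgauss_density_moment[OF v, of 1] by (intro integrable_mult_indicator) auto
    show "((?F \<circ> real_of_ereal) \<longlongrightarrow> ?F c) (at_right (ereal c))"
      unfolding ereal_tendsto_simps rgauss_density_def using v by (intro tendsto_intros) auto
    have "((\<lambda>x. exp (- (x\<^sup>2) / v)) \<longlongrightarrow> 0) at_top"
      using v by real_asymp
    then have "((\<lambda>x. - (v / 2) * (exp (- (x\<^sup>2) / v) / sqrt (pi * v))) \<longlongrightarrow> - (v / 2) * (0 / sqrt (pi * v))) at_top"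
      using v by (intro tendsto_intros) auto
    then show "((?F \<circ> real_of_ereal) \<longlongrightarrow> 0) (at_left \<infinity>)"
      unfolding ereal_tendsto_simps rgauss_density_def by simp
  qed auto
  finally show ?thesis by simp
qed

lemma integral_rgauss_density_mult:
  assumes s: "0 < s" and e: "0 < e"
  shows "(\<integral>u. rgauss_density e u * rgauss_density s u \<partial>lborel) = 1 / sqrt (pi * (s + e))"
proof -
  define v where "v = s * e / (s + e)"
  have v: "0 < v" using s e by (simp add: v_def)
  have "sqrt (pi * e) * sqrt (pi * s) = sqrt (pi * (s + e)) * sqrt (pi * v)"
    unfolding real_sqrt_mult[symmetric] v_def using s e by (simp add: field_simps)
  moreover have "exp (- (u\<^sup>2) / e) * exp (- (u\<^sup>2) / s) = exp (- (u\<^sup>2) / v)" for u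
    unfolding mult_exp_exp v_def using s e by (simp add: field_simps)
  ultimately have "rgauss_density e u * rgauss_density s u = rgauss_density v u / sqrt (pi * (s + e))" for u
    by (simp add: rgauss_density_def)
  then show ?thesis
    using integral_rgauss_density[OF v] by simp
qed

section \<open>Signs of a sum of two independent Gaussians\<close>

text \<open>Joint density of \<open>(Re h, Re n)\<close>, and of \<open>(Im h, Im n)\<close>, for independent
  \<open>h \<sim> CN(0, s)\<close> and \<open>n \<sim> CN(0, e)\<close>.\<close>
definition rgauss_pair :: "real \<Rightarrow> real \<Rightarrow> real \<times> real \<Rightarrow> real" where
  "rgauss_pair s e a = rgauss_density s (fst a) * rgauss_density e (snd a)"

lemma borel_measurable_rgauss_pair[measurable]:
  "rgauss_pair s e \<in> borel_measurable (lborel \<Otimes>\<^sub>M lborel)"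
  unfolding rgauss_pair_def[abs_def] by measurable

lemma integral_rgauss_pair_fst_snd:
  assumes "integrable lborel (\<lambda>x. rgauss_density s x * f x)"
    and "integrable lborel (\<lambda>u. rgauss_density e u * g u)"
  shows "integrable (lborel \<Otimes>\<^sub>M lborel) (\<lambda>a. rgauss_pair s e a * (f (fst a) * g (snd a)))"
    and "(\<integral>a. rgauss_pair s e a * (f (fst a) * g (snd a)) \<partial>(lborel \<Otimes>\<^sub>M lborel))
       = (\<integral>x. rgauss_density s x * f x \<partial>lborel) * (\<integral>u. rgauss_density e u * g u \<partial>lborel)"
  using lborel_pair.integrable_mult_fst_snd[OF assms] lborel_pair.integral_mult_fst_snd[OF assms]
  by (simp_all add: rgauss_pair_def ac_simps)

lemma abs_of_bool_le_one_plus_square: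
  fixes x :: real
  shows "\<bar>of_bool c :: real\<bar> \<le> 1 + x\<^sup>2" and "\<bar>x * of_bool c\<bar> \<le> 1 + x\<^sup>2"
proof -
  have "0 \<le> (\<bar>x\<bar> - 1)\<^sup>2" by simp
  then have "\<bar>x\<bar> \<le> 1 + x\<^sup>2" by (simp add: power2_eq_square algebra_simps abs_mult_self_eq)
  then show "\<bar>x * of_bool c\<bar> \<le> 1 + x\<^sup>2" by (simp add: abs_mult)
qed simp

lemma integrable_rgauss_pair:
  assumes s: "0 < s" and e: "0 < e" and [measurable]: "G \<in> borel_measurable (lborel \<Otimes>\<^sub>M lborel)"
    and G: "\<And>a. \<bar>G a\<bar> \<le> 1 + (fst a)\<^sup>2"
  shows "integrable (lborel \<Otimes>\<^sub>M lborel) (\<lambda>a. rgauss_pair s e a * G a)"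
proof (rule Bochner_Integration.integrable_bound)
  have "integrable lborel (\<lambda>x. rgauss_density s x * (1 + x\<^sup>2))"
    using integrable_rgauss_density_moment[OF s, of 0] integrable_rgauss_density_moment[OF s, of 2]
    by (simp add: distrib_left)
  then show "integrable (lborel \<Otimes>\<^sub>M lborel) (\<lambda>a. rgauss_pair s e a * ((1 + (fst a)\<^sup>2) * 1))"
    using integrable_rgauss_density[OF e] by (intro integral_rgauss_pair_fst_snd) auto
  show "AE a in lborel \<Otimes>\<^sub>M lborel. norm (rgauss_pair s e a * G a) \<le> norm (rgauss_pair s e a * ((1 + (fst a)\<^sup>2) * 1))"
    using s e G by (auto simp: abs_mult intro!: mult_left_mono)
qed simp

lemma integral_rgauss_pair_iterated:
  assumes "integrable (lborel \<Otimes>\<^sub>M lborel) (\<lambda>a. rgauss_pair s e a * G a)"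
  shows "(\<integral>a. rgauss_pair s e a * G a \<partial>(lborel \<Otimes>\<^sub>M lborel))
       = (\<integral>u. rgauss_density e u * (\<integral>x. rgauss_density s x * G (x, u) \<partial>lborel) \<partial>lborel)"
proof -
  have "(\<integral>a. rgauss_pair s e a * G a \<partial>(lborel \<Otimes>\<^sub>M lborel))
      = (\<integral>u. \<integral>x. rgauss_pair s e (x, u) * G (x, u) \<partial>lborel \<partial>lborel)"
    using lborel_pair.integral_snd[of "\<lambda>x u. rgauss_pair s e (x, u) * G (x, u)"] assms
    by (simp add: case_prod_beta')
  also have "\<dots> = (\<integral>u. rgauss_density e u * (\<integral>x. rgauss_density s x * G (x, u) \<partial>lborel) \<partial>lborel)"
    by (simp add: rgauss_pair_def ac_simps)
  finally show ?thesis .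
qed

lemma integral_rgauss_pair_uminus:
  assumes [measurable]: "G \<in> borel_measurable (lborel \<Otimes>\<^sub>M lborel)"
  shows "(\<integral>a. rgauss_pair s e a * G (- fst a, - snd a) \<partial>(lborel \<Otimes>\<^sub>M lborel))
       = (\<integral>a. rgauss_pair s e a * G a \<partial>(lborel \<Otimes>\<^sub>M lborel))"
proof -
  have "distr (lborel \<Otimes>\<^sub>M lborel) (lborel \<Otimes>\<^sub>M lborel) (\<lambda>(x :: real, u :: real). (- x, - u))
      = distr lborel borel uminus \<Otimes>\<^sub>M distr lborel borel uminus"
    by (subst pair_measure_distr)
      (auto simp: lborel_distr_uminus sigma_finite_lborel intro!: distr_cong sets_pair_measure_cong)
  also have "\<dots> = lborel \<Otimes>\<^sub>M lborel"
    by (simp add: lborel_distr_uminus)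
  finally have reflect: "distr (lborel \<Otimes>\<^sub>M lborel) (lborel \<Otimes>\<^sub>M lborel) (\<lambda>(x, u). (- x, - u))
      = (lborel \<Otimes>\<^sub>M lborel :: (real \<times> real) measure)" .
  have "(\<integral>a. rgauss_pair s e a * G a \<partial>(lborel \<Otimes>\<^sub>M lborel))
      = (\<integral>a. rgauss_pair s e a * G a \<partial>distr (lborel \<Otimes>\<^sub>M lborel) (lborel \<Otimes>\<^sub>M lborel) (\<lambda>(x, u). (- x, - u)))"
    by (simp only: reflect)
  also have "\<dots> = (\<integral>a. rgauss_pair s e a * G (- fst a, - snd a) \<partial>(lborel \<Otimes>\<^sub>M lborel))"
    by (subst integral_distr) (auto simp: rgauss_pair_def case_prod_beta')
  finally show ?thesis by simp
qed

lemma integral_rgauss_pair_moments: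
  assumes s: "0 < s" and e: "0 < e"
  shows "(\<integral>a. rgauss_pair s e a \<partial>(lborel \<Otimes>\<^sub>M lborel)) = 1"
    and "(\<integral>a. rgauss_pair s e a * fst a \<partial>(lborel \<Otimes>\<^sub>M lborel)) = 0"
    and "(\<integral>a. rgauss_pair s e a * (fst a)\<^sup>2 \<partial>(lborel \<Otimes>\<^sub>M lborel)) = s / 2"
proof -
  have moment: "(\<integral>a. rgauss_pair s e a * (fst a ^ k * 1) \<partial>(lborel \<Otimes>\<^sub>M lborel))
      = (\<integral>x. rgauss_density s x * x ^ k \<partial>lborel)" for k
    using integral_rgauss_pair_fst_snd(2)[of s "\<lambda>x. x ^ k" e "\<lambda>_. 1"]
      integrable_rgauss_density_moment[OF s] integrable_rgauss_density[OF e] integral_rgauss_density[OF e]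
    by simp
  show "(\<integral>a. rgauss_pair s e a \<partial>(lborel \<Otimes>\<^sub>M lborel)) = 1"
    using moment[of 0] integral_rgauss_density[OF s] by simp
  show "(\<integral>a. rgauss_pair s e a * fst a \<partial>(lborel \<Otimes>\<^sub>M lborel)) = 0"
    using moment[of 1] integral_rgauss_density_first_moment[OF s] by simp
  show "(\<integral>a. rgauss_pair s e a * (fst a)\<^sup>2 \<partial>(lborel \<Otimes>\<^sub>M lborel)) = s / 2"
    using moment[of 2] integral_rgauss_density_second_moment[OF s] by simp
qed

text \<open>\<open>E [Re h; Re (h + n) > 0]\<close> for independent \<open>h \<sim> CN(0, s)\<close> and \<open>n \<sim> CN(0, e)\<close>.\<close>
definition half_plane_mean :: "real \<Rightarrow> real \<Rightarrow> real" where
  "half_plane_mean e s = s / (2 * sqrt (pi * (s + e)))"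

lemma integral_rgauss_pair_sgn:
  assumes s: "0 < s" and e: "0 < e" and c: "c \<in> {-1, 0, 1}"
  shows "(\<integral>a. rgauss_pair s e a * of_bool (sgn (fst a + snd a) = c) \<partial>(lborel \<Otimes>\<^sub>M lborel)) = \<bar>c\<bar> / 2"
proof -
  let ?P = "\<lambda>c. \<integral>a. rgauss_pair s e a * of_bool (sgn (fst a + snd a) = c) \<partial>(lborel \<Otimes>\<^sub>M lborel)"
  have int: "integrable (lborel \<Otimes>\<^sub>M lborel) (\<lambda>a. rgauss_pair s e a * of_bool (sgn (fst a + snd a) = c))"
    for c by (rule integrable_rgauss_pair[OF s e]) auto
  have P0: "?P 0 = 0"
    by (rule integral_eq_zero_AE, rule AE_mp[OF AE_lborel_pair_sum_neq[of 0]]) (auto simp: sgn_0_0)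
  have "?P (-1) = (\<integral>a. rgauss_pair s e a * of_bool (sgn (- fst a + - snd a) = 1) \<partial>(lborel \<Otimes>\<^sub>M lborel))"
    by (intro Bochner_Integration.integral_cong) (auto simp: sgn_if)
  also have "\<dots> = ?P 1"
    using integral_rgauss_pair_uminus[of "\<lambda>a. of_bool (sgn (fst a + snd a) = 1)" s e] by simp
  finally have P_minus: "?P (-1) = ?P 1" .
  have "?P 1 + ?P (-1) + ?P 0 = (\<integral>a. rgauss_pair s e a * of_bool (sgn (fst a + snd a) = 1)
      + rgauss_pair s e a * of_bool (sgn (fst a + snd a) = -1)
      + rgauss_pair s e a * of_bool (sgn (fst a + snd a) = 0) \<partial>(lborel \<Otimes>\<^sub>M lborel))"
    using int by simp
  also have "\<dots> = (\<integral>a. rgauss_pair s e a \<partial>(lborel \<Otimes>\<^sub>M lborel))"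
    by (intro Bochner_Integration.integral_cong) (auto simp: sgn_if)
  also have "\<dots> = 1"
    by (rule integral_rgauss_pair_moments(1)[OF s e])
  finally show ?thesis
    using c P0 P_minus by auto
qed

lemma integral_rgauss_pair_fst_sgn:
  assumes s: "0 < s" and e: "0 < e" and c: "c \<in> {-1, 0, 1}"
  shows "(\<integral>a. rgauss_pair s e a * (fst a * of_bool (sgn (fst a + snd a) = c)) \<partial>(lborel \<Otimes>\<^sub>M lborel))
       = c * half_plane_mean e s"
proof -
  let ?E = "\<lambda>c. \<integral>a. rgauss_pair s e a * (fst a * of_bool (sgn (fst a + snd a) = c)) \<partial>(lborel \<Otimes>\<^sub>M lborel)"
  have E0: "?E 0 = 0"
    by (rule integral_eq_zero_AE, rule AE_mp[OF AE_lborel_pair_sum_neq[of 0]]) (auto simp: sgn_0_0)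
  have "?E (-1) = - (\<integral>a. rgauss_pair s e a * (- fst a * of_bool (sgn (- fst a + - snd a) = 1)) \<partial>(lborel \<Otimes>\<^sub>M lborel))"
    by (subst integral_minus[symmetric], intro Bochner_Integration.integral_cong) (auto simp: sgn_if)
  also have "\<dots> = - ?E 1"
    using integral_rgauss_pair_uminus[of "\<lambda>a. fst a * of_bool (sgn (fst a + snd a) = 1)" s e] by simp
  finally have E_minus: "?E (-1) = - ?E 1" .
  have inner: "(\<integral>x. rgauss_density s x * (x * of_bool (sgn (x + u) = 1)) \<partial>lborel) = s / 2 * rgauss_density s u"
    for u
  proof -
    have "(\<integral>x. rgauss_density s x * (x * of_bool (sgn (x + u) = 1)) \<partial>lborel)
        = (\<integral>x. rgauss_density s x * x * of_bool (- u < x) \<partial>lborel)"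
      by (intro Bochner_Integration.integral_cong) (auto simp: sgn_if)
    then show ?thesis
      by (simp add: integral_rgauss_density_first_moment_tail[OF s])
  qed
  have "?E 1 = (\<integral>u. rgauss_density e u * (s / 2 * rgauss_density s u) \<partial>lborel)"
    by (subst integral_rgauss_pair_iterated) (auto intro!: integrable_rgauss_pair s e simp: abs_of_bool_le_one_plus_square inner)
  also have "\<dots> = half_plane_mean e s"
    using integral_rgauss_density_mult[OF s e] by (simp add: half_plane_mean_def ac_simps)
  finally show ?thesis
    using c E0 E_minus by auto
qed

definition cgauss_pair :: "real \<Rightarrow> real \<Rightarrow> complex \<times> complex \<Rightarrow> real" where
  "cgauss_pair s e w = cgauss_density s (fst w) * cgauss_density e (snd w)"

lemma borel_measurable_cgauss_pair[measurable]:
  "cgauss_pair s e \<in> borel_measurable (lborel \<Otimes>\<^sub>M lborel)"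
  unfolding cgauss_pair_def[abs_def] by measurable

lemma cgauss_pair_join_re_im:
  "0 < s \<Longrightarrow> 0 < e \<Longrightarrow> cgauss_pair s e (join_re_im v) = rgauss_pair s e (fst v) * rgauss_pair s e (snd v)"
  by (simp add: cgauss_pair_def join_re_im_def rgauss_pair_def cgauss_density_Complex)

lemma integral_cgauss_pair_re_im:
  assumes s: "0 < s" and e: "0 < e"
    and [measurable]: "G1 \<in> borel_measurable (lborel \<Otimes>\<^sub>M lborel)" "G2 \<in> borel_measurable (lborel \<Otimes>\<^sub>M lborel)"
    and G1: "integrable (lborel \<Otimes>\<^sub>M lborel) (\<lambda>a. rgauss_pair s e a * G1 a)"
    and G2: "integrable (lborel \<Otimes>\<^sub>M lborel) (\<lambda>a. rgauss_pair s e a * G2 a)"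
  shows "integrable (lborel \<Otimes>\<^sub>M lborel)
      (\<lambda>w. cgauss_pair s e w * (G1 (Re (fst w), Re (snd w)) * G2 (Im (fst w), Im (snd w))))"
    and "(\<integral>w. cgauss_pair s e w * (G1 (Re (fst w), Re (snd w)) * G2 (Im (fst w), Im (snd w))) \<partial>(lborel \<Otimes>\<^sub>M lborel))
      = (\<integral>a. rgauss_pair s e a * G1 a \<partial>(lborel \<Otimes>\<^sub>M lborel)) * (\<integral>a. rgauss_pair s e a * G2 a \<partial>(lborel \<Otimes>\<^sub>M lborel))"
proof -
  have R2: "pair_sigma_finite (lborel \<Otimes>\<^sub>M lborel :: (real \<times> real) measure) (lborel \<Otimes>\<^sub>M lborel)"
    by (simp add: pair_sigma_finite_def lborel_prod sigma_finite_lborel)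
  let ?F = "\<lambda>w. cgauss_pair s e w * (G1 (Re (fst w), Re (snd w)) * G2 (Im (fst w), Im (snd w)))"
  have F_join: "?F (join_re_im v) = (rgauss_pair s e (fst v) * G1 (fst v)) * (rgauss_pair s e (snd v) * G2 (snd v))" for v
    using s e by (simp add: cgauss_pair_join_re_im) (simp add: join_re_im_def ac_simps)
  have "integrable (lborel \<Otimes>\<^sub>M lborel) ?F
      \<longleftrightarrow> integrable (distr ((lborel \<Otimes>\<^sub>M lborel) \<Otimes>\<^sub>M (lborel \<Otimes>\<^sub>M lborel)) (lborel \<Otimes>\<^sub>M lborel) join_re_im) ?F"
    by (simp add: distr_join_re_im_lborel)
  also have "\<dots> \<longleftrightarrow> integrable ((lborel \<Otimes>\<^sub>M lborel) \<Otimes>\<^sub>M (lborel \<Otimes>\<^sub>M lborel)) (\<lambda>v. ?F (join_re_im v))"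
    by (rule integrable_distr_eq) auto
  finally show "integrable (lborel \<Otimes>\<^sub>M lborel) ?F"
    using pair_sigma_finite.integrable_mult_fst_snd[OF R2 G1 G2] by (simp add: F_join)
  have "(\<integral>w. ?F w \<partial>(lborel \<Otimes>\<^sub>M lborel))
      = (\<integral>w. ?F w \<partial>distr ((lborel \<Otimes>\<^sub>M lborel) \<Otimes>\<^sub>M (lborel \<Otimes>\<^sub>M lborel)) (lborel \<Otimes>\<^sub>M lborel) join_re_im)"
    by (simp add: distr_join_re_im_lborel)
  also have "\<dots> = (\<integral>v. ?F (join_re_im v) \<partial>((lborel \<Otimes>\<^sub>M lborel) \<Otimes>\<^sub>M (lborel \<Otimes>\<^sub>M lborel)))"
    by (rule integral_distr) auto
  finally show "(\<integral>w. ?F w \<partial>(lborel \<Otimes>\<^sub>M lborel))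
      = (\<integral>a. rgauss_pair s e a * G1 a \<partial>(lborel \<Otimes>\<^sub>M lborel)) * (\<integral>a. rgauss_pair s e a * G2 a \<partial>(lborel \<Otimes>\<^sub>M lborel))"
    using pair_sigma_finite.integral_mult_fst_snd[OF R2 G1 G2] by (simp add: F_join)
qed

section \<open>The quantized Gaussian-mixture channel\<close>

lemma Qb_eq_Qb_iff: "Qb y = Qb y' \<longleftrightarrow> (sgn (Re y), sgn (Im y)) = (sgn (Re y'), sgn (Im y'))"
  by (simp add: Qb_def divide_cancel_right complex_eq_iff)

locale gmm_channel = prob_space M for M :: "'a measure" +
  fixes K :: nat and p s :: "nat \<Rightarrow> real" and e :: real and h n :: "'a \<Rightarrow> complex"
  assumes p_pos: "\<forall>k<K. p k > 0"
    and p_sum: "(\<Sum>k<K. p k) = 1"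
    and s_pos: "\<forall>k<K. s k > 0"
    and e_pos: "e > 0"
    and h: "distributed M lborel h (\<lambda>z. ennreal (gmm_density K p s z))"
    and n: "distributed M lborel n (\<lambda>z. ennreal (cgauss_density e z))"
    and hn: "indep_var borel h borel n"
begin

lemma measurable_h_n[measurable]: "h \<in> borel_measurable M" "n \<in> borel_measurable M"
  using distributed_measurable[OF h] distributed_measurable[OF n] by simp_all

lemma distributed_h_n:
  "distributed M (lborel \<Otimes>\<^sub>M lborel) (\<lambda>w. (h w, n w)) (\<lambda>w. ennreal (\<Sum>k<K. p k * cgauss_pair (s k) e w))"
proof -
  have "distr M lborel h = distr M borel h" "distr M lborel n = distr M borel n"
    "distr M (lborel \<Otimes>\<^sub>M lborel) (\<lambda>x. (h x, n x)) = distr M (borel \<Otimes>\<^sub>M borel) (\<lambda>x. (h x, n x))"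
    by (auto intro!: distr_cong sets_pair_measure_cong)
  then have "indep_var lborel h lborel n"
    using hn unfolding indep_var_distribution_eq by simp
  from distributed_joint_indep[OF sigma_finite_lborel sigma_finite_lborel h n this]
  have "distributed M (lborel \<Otimes>\<^sub>M lborel) (\<lambda>w. (h w, n w))
      (\<lambda>(z, u). ennreal (gmm_density K p s z) * ennreal (cgauss_density e u))" .
  moreover have "(\<lambda>(z, u). ennreal (gmm_density K p s z) * ennreal (cgauss_density e u))
      = (\<lambda>w. ennreal (\<Sum>k<K. p k * cgauss_pair (s k) e w))"
  proof -
    have "0 \<le> gmm_density K p s z" for z
      unfolding gmm_density_def using p_pos s_pos
      by (intro sum_nonneg) (auto intro!: mult_nonneg_nonneg cgauss_density_nonneg)
    then show ?thesis
      using e_pos by (auto simp: fun_eq_iff ennreal_mult[symmetric] cgauss_density_nonneg gmm_density_def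
          cgauss_pair_def sum_distrib_right mult.assoc)
  qed
  ultimately show ?thesis by simp
qed

lemma integral_re_im_product:
  assumes G1_measurable[measurable]: "G1 \<in> borel_measurable (lborel \<Otimes>\<^sub>M lborel)"
    and G2_measurable[measurable]: "G2 \<in> borel_measurable (lborel \<Otimes>\<^sub>M lborel)"
    and G1: "\<And>a. \<bar>G1 a\<bar> \<le> 1 + (fst a)\<^sup>2" and G2: "\<And>a. \<bar>G2 a\<bar> \<le> 1 + (fst a)\<^sup>2"
  shows "integrable M (\<lambda>w. G1 (Re (h w), Re (n w)) * G2 (Im (h w), Im (n w)))"
    and "(\<integral>w. G1 (Re (h w), Re (n w)) * G2 (Im (h w), Im (n w)) \<partial>M)
      = (\<Sum>k<K. p k * ((\<integral>a. rgauss_pair (s k) e a * G1 a \<partial>(lborel \<Otimes>\<^sub>M lborel))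
                        * (\<integral>a. rgauss_pair (s k) e a * G2 a \<partial>(lborel \<Otimes>\<^sub>M lborel))))"
proof -
  let ?H = "\<lambda>w. G1 (Re (fst w), Re (snd w)) * G2 (Im (fst w), Im (snd w))"
  have component: "integrable (lborel \<Otimes>\<^sub>M lborel) (\<lambda>w. cgauss_pair (s k) e w * ?H w)"
    "(\<integral>w. cgauss_pair (s k) e w * ?H w \<partial>(lborel \<Otimes>\<^sub>M lborel))
      = (\<integral>a. rgauss_pair (s k) e a * G1 a \<partial>(lborel \<Otimes>\<^sub>M lborel)) * (\<integral>a. rgauss_pair (s k) e a * G2 a \<partial>(lborel \<Otimes>\<^sub>M lborel))"
    if "k < K" for k
  proof -
    have s: "0 < s k" using that s_pos by simp
    note integrable_rgauss_pair[OF s e_pos G1_measurable G1] integrable_rgauss_pair[OF s e_pos G2_measurable G2]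
    from integral_cgauss_pair_re_im[OF s e_pos G1_measurable G2_measurable this]
    show "integrable (lborel \<Otimes>\<^sub>M lborel) (\<lambda>w. cgauss_pair (s k) e w * ?H w)"
      "(\<integral>w. cgauss_pair (s k) e w * ?H w \<partial>(lborel \<Otimes>\<^sub>M lborel))
      = (\<integral>a. rgauss_pair (s k) e a * G1 a \<partial>(lborel \<Otimes>\<^sub>M lborel)) * (\<integral>a. rgauss_pair (s k) e a * G2 a \<partial>(lborel \<Otimes>\<^sub>M lborel))"
      by simp_all
  qed
  have mixture: "(\<Sum>k<K. p k * cgauss_pair (s k) e w) * ?H w = (\<Sum>k<K. p k * (cgauss_pair (s k) e w * ?H w))"
    for w by (simp add: sum_distrib_right mult.assoc)
  have density_nonneg: "0 \<le> (\<Sum>k<K. p k * cgauss_pair (s k) e w)" for w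
    using p_pos s_pos e_pos
    by (intro sum_nonneg) (auto simp: cgauss_pair_def intro!: mult_nonneg_nonneg cgauss_density_nonneg)
  have "integrable (lborel \<Otimes>\<^sub>M lborel) (\<lambda>w. (\<Sum>k<K. p k * cgauss_pair (s k) e w) * ?H w)"
    unfolding mixture using component(1) by (intro Bochner_Integration.integrable_sum integrable_mult_right) auto
  then show "integrable M (\<lambda>w. G1 (Re (h w), Re (n w)) * G2 (Im (h w), Im (n w)))"
    using distributed_integrable[OF distributed_h_n, of ?H] density_nonneg by simp
  have "(\<integral>w. G1 (Re (h w), Re (n w)) * G2 (Im (h w), Im (n w)) \<partial>M)
      = (\<integral>w. (\<Sum>k<K. p k * cgauss_pair (s k) e w) * ?H w \<partial>(lborel \<Otimes>\<^sub>M lborel))"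
    using distributed_integral[OF distributed_h_n, of ?H] density_nonneg by simp
  also have "\<dots> = (\<Sum>k<K. p k * (\<integral>w. cgauss_pair (s k) e w * ?H w \<partial>(lborel \<Otimes>\<^sub>M lborel)))"
    unfolding mixture using component(1) by (subst Bochner_Integration.integral_sum) auto
  also have "\<dots> = (\<Sum>k<K. p k * ((\<integral>a. rgauss_pair (s k) e a * G1 a \<partial>(lborel \<Otimes>\<^sub>M lborel))
                        * (\<integral>a. rgauss_pair (s k) e a * G2 a \<partial>(lborel \<Otimes>\<^sub>M lborel))))"
    by (rule sum.cong[OF refl]) (simp add: component(2))
  finally show "(\<integral>w. G1 (Re (h w), Re (n w)) * G2 (Im (h w), Im (n w)) \<partial>M)
      = (\<Sum>k<K. p k * ((\<integral>a. rgauss_pair (s k) e a * G1 a \<partial>(lborel \<Otimes>\<^sub>M lborel))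
                        * (\<integral>a. rgauss_pair (s k) e a * G2 a \<partial>(lborel \<Otimes>\<^sub>M lborel))))" .
qed

lemma s_gt_0[simp]: "k < K \<Longrightarrow> 0 < s k"
  using s_pos by simp

lemma second_moment_h:
  shows "integrable M (\<lambda>w. (cmod (h w))\<^sup>2)" and "(\<integral>w. (cmod (h w))\<^sup>2 \<partial>M) = (\<Sum>k<K. p k * s k)"
proof -
  note re = integral_re_im_product[of "\<lambda>a. (fst a)\<^sup>2" "\<lambda>_. 1", simplified]
    and im = integral_re_im_product[of "\<lambda>_. 1" "\<lambda>a. (fst a)\<^sup>2", simplified]
  have split: "(cmod (h w))\<^sup>2 = (Re (h w))\<^sup>2 + (Im (h w))\<^sup>2" for w
    by (simp add: cmod_power2)
  show "integrable M (\<lambda>w. (cmod (h w))\<^sup>2)"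
    unfolding split using re(1) im(1) by simp
  have "(\<integral>w. (cmod (h w))\<^sup>2 \<partial>M)
      = (\<Sum>k<K. p k * ((\<integral>a. rgauss_pair (s k) e a * (fst a)\<^sup>2 \<partial>(lborel \<Otimes>\<^sub>M lborel))
                          * (\<integral>a. rgauss_pair (s k) e a \<partial>(lborel \<Otimes>\<^sub>M lborel))))
      + (\<Sum>k<K. p k * ((\<integral>a. rgauss_pair (s k) e a \<partial>(lborel \<Otimes>\<^sub>M lborel))
                          * (\<integral>a. rgauss_pair (s k) e a * (fst a)\<^sup>2 \<partial>(lborel \<Otimes>\<^sub>M lborel))))"
    unfolding split using re im by (simp add: Bochner_Integration.integral_add)
  also have "\<dots> = (\<Sum>k<K. p k * (s k / 2)) + (\<Sum>k<K. p k * (s k / 2))"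
    by (intro arg_cong2[where f = "(+)"] sum.cong refl) (simp_all add: integral_rgauss_pair_moments e_pos)
  also have "\<dots> = (\<Sum>k<K. p k * s k)"
    by (simp add: sum.distrib[symmetric] field_simps)
  finally show "(\<integral>w. (cmod (h w))\<^sup>2 \<partial>M) = (\<Sum>k<K. p k * s k)" .
qed

definition quadrant :: "real \<times> real \<Rightarrow> 'a set" where
  "quadrant q = {w \<in> space M. (sgn (Re (h w + n w)), sgn (Im (h w + n w))) = q}"

lemma sets_quadrant[measurable]: "quadrant q \<in> events"
  unfolding quadrant_def by measurable

lemma indicator_quadrant:
  "w \<in> space M \<Longrightarrow> indicator (quadrant (a, b)) w
     = (of_bool (sgn (Re (h w) + Re (n w)) = a) * of_bool (sgn (Im (h w) + Im (n w)) = b) :: real)"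
  by (auto simp: quadrant_def indicator_def)

lemma measure_quadrant:
  assumes a: "a \<in> {-1, 0, 1}" and b: "b \<in> {-1, 0, 1}"
  shows "measure M (quadrant (a, b)) = \<bar>a\<bar> * \<bar>b\<bar> / 4"
proof -
  have "measure M (quadrant (a, b)) = (\<integral>w. indicator (quadrant (a, b)) w \<partial>M)"
    by simp
  also have "\<dots> = (\<integral>w. of_bool (sgn (Re (h w) + Re (n w)) = a) * of_bool (sgn (Im (h w) + Im (n w)) = b) \<partial>M)"
    by (intro Bochner_Integration.integral_cong) (auto simp: indicator_quadrant)
  also have "\<dots> = (\<Sum>k<K. p k * ((\<integral>q. rgauss_pair (s k) e q * of_bool (sgn (fst q + snd q) = a) \<partial>(lborel \<Otimes>\<^sub>M lborel))
      * (\<integral>q. rgauss_pair (s k) e q * of_bool (sgn (fst q + snd q) = b) \<partial>(lborel \<Otimes>\<^sub>M lborel))))"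
    using integral_re_im_product(2)[of "\<lambda>q. of_bool (sgn (fst q + snd q) = a)" "\<lambda>q. of_bool (sgn (fst q + snd q) = b)",
        OF _ _ abs_of_bool_le_one_plus_square(1) abs_of_bool_le_one_plus_square(1)]
    by simp
  also have "\<dots> = (\<Sum>k<K. p k * (\<bar>a\<bar> / 2 * (\<bar>b\<bar> / 2)))"
    by (intro sum.cong refl) (simp add: integral_rgauss_pair_sgn[OF _ e_pos a] integral_rgauss_pair_sgn[OF _ e_pos b])
  also have "\<dots> = (\<Sum>k<K. p k) * (\<bar>a\<bar> * \<bar>b\<bar> / 4)"
    by (simp add: sum_distrib_right)
  also have "\<dots> = \<bar>a\<bar> * \<bar>b\<bar> / 4"
    using p_sum by simp
  finally show ?thesis .
qed

lemma integral_quadrant_h: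
  assumes a: "a \<in> {-1, 0, 1}" and b: "b \<in> {-1, 0, 1}"
  defines "m \<equiv> \<Sum>k<K. p k * half_plane_mean e (s k)"
  shows "(\<integral>w. indicator (quadrant (a, b)) w *\<^sub>R h w \<partial>M) = Complex (a * \<bar>b\<bar> / 2 * m) (\<bar>a\<bar> * b / 2 * m)"
proof -
  have int: "integrable M (\<lambda>w. indicator (quadrant (a, b)) w *\<^sub>R h w)"
    using square_norm_integrable_imp_integrable[OF _ second_moment_h(1)]
    by (intro integrable_mult_indicator sets_quadrant) simp
  have "Re (\<integral>w. indicator (quadrant (a, b)) w *\<^sub>R h w \<partial>M)
      = (\<integral>w. (Re (h w) * of_bool (sgn (Re (h w) + Re (n w)) = a)) * of_bool (sgn (Im (h w) + Im (n w)) = b) \<partial>M)"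
    unfolding integral_Re[OF int, symmetric]
    by (intro Bochner_Integration.integral_cong) (auto simp: indicator_quadrant)
  also have "\<dots> = (\<Sum>k<K. p k * ((\<integral>q. rgauss_pair (s k) e q * (fst q * of_bool (sgn (fst q + snd q) = a)) \<partial>(lborel \<Otimes>\<^sub>M lborel))
      * (\<integral>q. rgauss_pair (s k) e q * of_bool (sgn (fst q + snd q) = b) \<partial>(lborel \<Otimes>\<^sub>M lborel))))"
    using integral_re_im_product(2)[of "\<lambda>q. fst q * of_bool (sgn (fst q + snd q) = a)" "\<lambda>q. of_bool (sgn (fst q + snd q) = b)",
        OF _ _ abs_of_bool_le_one_plus_square(2) abs_of_bool_le_one_plus_square(1)]
    by simp
  also have "\<dots> = (\<Sum>k<K. p k * (a * half_plane_mean e (s k) * (\<bar>b\<bar> / 2)))"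
    by (intro sum.cong refl) (simp add: integral_rgauss_pair_sgn[OF _ e_pos a] integral_rgauss_pair_sgn[OF _ e_pos b]
        integral_rgauss_pair_fst_sgn[OF _ e_pos a] integral_rgauss_pair_fst_sgn[OF _ e_pos b])
  finally have re: "Re (\<integral>w. indicator (quadrant (a, b)) w *\<^sub>R h w \<partial>M) = a * \<bar>b\<bar> / 2 * m"
    by (simp add: m_def sum_distrib_left sum_distrib_right ac_simps)
  have "Im (\<integral>w. indicator (quadrant (a, b)) w *\<^sub>R h w \<partial>M)
      = (\<integral>w. of_bool (sgn (Re (h w) + Re (n w)) = a) * (Im (h w) * of_bool (sgn (Im (h w) + Im (n w)) = b)) \<partial>M)"
    unfolding integral_Im[OF int, symmetric]
    by (intro Bochner_Integration.integral_cong) (auto simp: indicator_quadrant)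
  also have "\<dots> = (\<Sum>k<K. p k * ((\<integral>q. rgauss_pair (s k) e q * of_bool (sgn (fst q + snd q) = a) \<partial>(lborel \<Otimes>\<^sub>M lborel))
      * (\<integral>q. rgauss_pair (s k) e q * (fst q * of_bool (sgn (fst q + snd q) = b)) \<partial>(lborel \<Otimes>\<^sub>M lborel))))"
    using integral_re_im_product(2)[of "\<lambda>q. of_bool (sgn (fst q + snd q) = a)" "\<lambda>q. fst q * of_bool (sgn (fst q + snd q) = b)",
        OF _ _ abs_of_bool_le_one_plus_square(1) abs_of_bool_le_one_plus_square(2)]
    by simp
  also have "\<dots> = (\<Sum>k<K. p k * (\<bar>a\<bar> / 2 * (b * half_plane_mean e (s k))))"
    by (intro sum.cong refl) (simp add: integral_rgauss_pair_sgn[OF _ e_pos a] integral_rgauss_pair_sgn[OF _ e_pos b]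
        integral_rgauss_pair_fst_sgn[OF _ e_pos a] integral_rgauss_pair_fst_sgn[OF _ e_pos b])
  finally have im: "Im (\<integral>w. indicator (quadrant (a, b)) w *\<^sub>R h w \<partial>M) = \<bar>a\<bar> * b / 2 * m"
    by (simp add: m_def sum_distrib_left sum_distrib_right ac_simps)
  show ?thesis
    using re im by (simp add: complex_eq_iff)
qed

lemma mse_quant_eq:
  "mse_quant M h n = (\<Sum>k<K. p k * s k) - 8 * (\<Sum>k<K. p k * half_plane_mean e (s k))\<^sup>2"
proof -
  define m where "m = (\<Sum>k<K. p k * half_plane_mean e (s k))"
  let ?T = "\<lambda>w. (sgn (Re (h w + n w)), sgn (Im (h w + n w)))"
  let ?S = "{-1, 0, 1 :: real}"
  have "mse_quant M h n = (\<integral>w. (cmod (h w - cond_mean_disc M h ?T w))\<^sup>2 \<partial>M)"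
    by (simp add: mse_quant_def cond_mean_disc_def Qb_eq_Qb_iff)
  also have "\<dots> = (\<integral>w. (cmod (h w))\<^sup>2 \<partial>M)
      - (\<Sum>q\<in>?S \<times> ?S. (cmod (\<integral>w. indicator (quadrant q) w *\<^sub>R h w \<partial>M))\<^sup>2 / measure M (quadrant q))"
    unfolding quadrant_def
    by (rule mse_cond_mean_disc) (auto simp: second_moment_h(1) sgn_if)
  also have "(\<Sum>q\<in>?S \<times> ?S. (cmod (\<integral>w. indicator (quadrant q) w *\<^sub>R h w \<partial>M))\<^sup>2 / measure M (quadrant q))
      = (\<Sum>q\<in>?S \<times> ?S. \<bar>fst q\<bar> * \<bar>snd q\<bar> * (2 * m\<^sup>2))"
    by (intro sum.cong refl)
      (auto simp: measure_quadrant integral_quadrant_h m_def[symmetric] cmod_power2 field_simps)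
  also have "\<dots> = 8 * m\<^sup>2"
    by (simp add: sum.cartesian_product[symmetric])
  finally show ?thesis
    by (simp add: second_moment_h(2) m_def)
qed

end

section \<open>Concavity\<close>

text \<open>\<open>(m + 2 e) / (2 (m + e)^(3/2))\<close> is the derivative of the concave function
  \<open>x \<mapsto> x / sqrt (x + e)\<close> at \<open>m\<close>.\<close>
lemma div_sqrt_add_le_tangent:
  fixes x m e :: real
  assumes x: "0 < x" and m: "0 < m" and e: "0 < e"
  shows "x / sqrt (x + e) \<le> m / sqrt (m + e) + (m + 2 * e) / (2 * sqrt (m + e) ^ 3) * (x - m)"
proof -
  define a b where "a = sqrt (x + e)" and "b = sqrt (m + e)"
  have a: "0 < a" and b: "0 < b" and xa: "x = a\<^sup>2 - e" and mb: "m = b\<^sup>2 - e"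
    using x m e by (auto simp: a_def b_def)
  have "(b\<^sup>2 - e) / b + (b\<^sup>2 + e) / (2 * b ^ 3) * (a\<^sup>2 - b\<^sup>2) - (a\<^sup>2 - e) / a
      = (a * b\<^sup>2 * (a - b)\<^sup>2 + e * (a - b)\<^sup>2 * (a + 2 * b)) / (2 * a * b ^ 3)"
    using a b by (simp add: field_simps power2_eq_square power3_eq_cube)
  also have "\<dots> \<ge> 0"
    using a b e by (intro divide_nonneg_pos add_nonneg_nonneg mult_nonneg_nonneg) auto
  finally have "(a\<^sup>2 - e) / a \<le> (b\<^sup>2 - e) / b + (b\<^sup>2 + e) / (2 * b ^ 3) * (a\<^sup>2 - b\<^sup>2)"
    by simp
  moreover have "x / sqrt (x + e) = (a\<^sup>2 - e) / a"
    unfolding a_def[symmetric] using xa by simp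
  moreover have "m / sqrt (m + e) + (m + 2 * e) / (2 * sqrt (m + e) ^ 3) * (x - m)
      = (b\<^sup>2 - e) / b + (b\<^sup>2 + e) / (2 * b ^ 3) * (a\<^sup>2 - b\<^sup>2)"
    unfolding b_def[symmetric] using xa mb by simp
  ultimately show ?thesis by simp
qed

lemma half_plane_mean_nonneg: "0 \<le> v \<Longrightarrow> 0 \<le> e \<Longrightarrow> 0 \<le> half_plane_mean e v"
  by (simp add: half_plane_mean_def)

lemma sum_weighted_pos:
  fixes p s :: "nat \<Rightarrow> real"
  assumes "\<forall>k<K. p k > 0" and "(\<Sum>k<K. p k) = 1" and "\<forall>k<K. s k > 0"
  shows "0 < (\<Sum>k<K. p k * s k)"
proof -
  have "K \<noteq> 0" using assms(2) by (rule contrapos_pn) simp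
  then show ?thesis using assms(1,3) by (intro sum_pos) auto
qed

lemma half_plane_mean_eq: "half_plane_mean e v = v / sqrt (v + e) / (2 * sqrt pi)"
  by (simp add: half_plane_mean_def real_sqrt_mult)

lemma sum_half_plane_mean_le:
  fixes p s :: "nat \<Rightarrow> real"
  assumes p_pos: "\<forall>k<K. p k > 0" and p_sum: "(\<Sum>k<K. p k) = 1" and s_pos: "\<forall>k<K. s k > 0"
    and e: "0 < e"
  shows "(\<Sum>k<K. p k * half_plane_mean e (s k)) \<le> half_plane_mean e (\<Sum>k<K. p k * s k)"
proof -
  define m where "m = (\<Sum>k<K. p k * s k)"
  define d where "d = (m + 2 * e) / (2 * sqrt (m + e) ^ 3)"
  have m: "0 < m"
    unfolding m_def using p_pos p_sum s_pos by (rule sum_weighted_pos)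
  have "(\<Sum>k<K. p k * (s k / sqrt (s k + e))) \<le> (\<Sum>k<K. p k * (m / sqrt (m + e) + d * (s k - m)))"
    unfolding d_def using p_pos s_pos div_sqrt_add_le_tangent[OF _ m e]
    by (intro sum_mono mult_left_mono) auto
  also have "\<dots> = (\<Sum>k<K. m / sqrt (m + e) * p k + d * (p k * s k) - d * m * p k)"
    by (intro sum.cong refl) (simp add: algebra_simps)
  also have "\<dots> = m / sqrt (m + e) * (\<Sum>k<K. p k) + d * (\<Sum>k<K. p k * s k) - d * m * (\<Sum>k<K. p k)"
    by (simp only: sum_subtractf sum.distrib sum_distrib_left)
  also have "\<dots> = m / sqrt (m + e)"
    using p_sum by (simp add: m_def)
  finally have "(\<Sum>k<K. p k * (s k / sqrt (s k + e))) / (2 * sqrt pi) \<le> m / sqrt (m + e) / (2 * sqrt pi)"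
    by (rule divide_right_mono) simp
  then show ?thesis
    by (simp add: half_plane_mean_eq m_def sum_divide_distrib)
qed

theorem theorem3:
  fixes K :: nat and p s :: "nat \<Rightarrow> real" and eta2 :: real
    and M :: "'a measure" and h n :: "'a \<Rightarrow> complex"
    and M' :: "'b measure" and g n' :: "'b \<Rightarrow> complex"
  assumes p_pos: "\<forall>k<K. p k > 0"
    and p_sum: "(\<Sum>k<K. p k) = 1"
    and s_pos: "\<forall>k<K. s k > 0"
    and eta_pos: "eta2 > 0"
    and M: "prob_space M"
    and h: "distributed M lborel h (\<lambda>z. ennreal (gmm_density K p s z))"
    and n: "distributed M lborel n (\<lambda>z. ennreal (cgauss_density eta2 z))"
    and hn: "prob_space.indep_var M borel h borel n"
    and M': "prob_space M'"
    and g: "distributed M' lborel g (\<lambda>z. ennreal (cgauss_density (\<Sum>k<K. p k * s k) z))"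
    and n': "distributed M' lborel n' (\<lambda>z. ennreal (cgauss_density eta2 z))"
    and gn: "prob_space.indep_var M' borel g borel n'"
  shows "mse_quant M' g n' \<le> mse_quant M h n"
proof -
  define v where "v = (\<Sum>k<K. p k * s k)"
  have v: "0 < v"
    unfolding v_def using p_pos p_sum s_pos by (rule sum_weighted_pos)
  have "mse_quant M h n = v - 8 * (\<Sum>k<K. p k * half_plane_mean eta2 (s k))\<^sup>2"
    unfolding v_def using assms
    by (intro gmm_channel.mse_quant_eq) (simp add: gmm_channel_def gmm_channel_axioms_def)
  moreover have "mse_quant M' g n' = v - 8 * (half_plane_mean eta2 v)\<^sup>2"
    using gmm_channel.mse_quant_eq[of M' 1 "\<lambda>_. 1" "\<lambda>_. v" eta2 g n'] M' g n' gn v eta_pos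
    by (simp add: gmm_channel_def gmm_channel_axioms_def gmm_density_def v_def)
  moreover have "(\<Sum>k<K. p k * half_plane_mean eta2 (s k)) \<le> half_plane_mean eta2 v"
    unfolding v_def by (rule sum_half_plane_mean_le[OF p_pos p_sum s_pos eta_pos])
  moreover have "0 \<le> (\<Sum>k<K. p k * half_plane_mean eta2 (s k))"
    using p_pos s_pos eta_pos by (intro sum_nonneg mult_nonneg_nonneg half_plane_mean_nonneg) auto
  ultimately show ?thesis
    by (simp add: power_mono)
qed

end
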